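(* Let $T=(F_0,F_1,F_2)$ be a template of order $10$ and type $(4,4,2,2,2)$ (so rows $0$–$3$ and columns $0$–$3$ are relational, and each $F_i$ has exactly two ones in each row and column). Then: (i) every cell in $Q_2$ or $Q_3$ has type ${*}{*}000$; (ii) every cell in $Q_1$ has type $11001$, $11010$, $11100$ or $11111$, and each of these four types occurs exactly once in each row and exactly once in each column of $Q_1$; (iii) every cell in $Q_4$ has type $00001$, $00010$ or $00100$, and each of these three types occurs exactly twice in each row and exactly twice in each column of $Q_4$. Here ${*}$ denotes an arbitrary bit.
   Context: For $n$ even and even $\lambda_0,\dots,\lambda_{k-1}$, a template of order $n$ and type $(\lambda_0,\dots,\lambda_{k-1})$ is a list $(F_0,\dots,F_{k-3})$ of $n\times n$ arrays over $\{0,1\}$ such that $F_{t-2}$ has exactly $\lambda_t$ ones in each row and each column, the arrays are pairwise orthogonal (for arrays $F,F'$ with $\lambda,\mu$ ones per row/column, each pair $(a,b)\in\{0,1\}^2$ occurs in exactly $f_af'_b$ cells, where $f_1=\lambda,f_0=n-\lambda,f'_1=\mu,f'_0=n-\mu$), rows $0,\dots,\lambda_0-1$ and columns $0,\dots,\lambda_1-1$ are called relational, and every cell has weight congruent to $\chi=\frac12\sum_i\lambda_i$ modulo $2$. The type of cell $(i,j)$ is the binary string $xyF_0[i,j]\cdots F_{k-3}[i,j]$ where $x=1$ iff row $i$ is relational and $y=1$ iff column $j$ is relational; its weight is its number of ones. (For type $(4,4,2,2,2)$, $\chi=7$, so all cells have odd weight.) Quadrants for order $10$ with $\lambda_0=\lambda_1=4$: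 $Q_1$ = rows $0$–$3$ × columns $0$–$3$; $Q_2$ = rows $0$–$3$ × columns $4$–$9$; $Q_3$ = rows $4$–$9$ × columns $0$–$3$; $Q_4$ = rows $4$–$9$ × columns $4$–$9$. *)

theory Defs
  imports Main
begin

definition is01 :: "nat \<Rightarrow> (nat \<Rightarrow> nat \<Rightarrow> nat) \<Rightarrow> bool" where
  "is01 n A \<longleftrightarrow> (\<forall>i<n. \<forall>j<n. A i j \<in> {0,1})"

definition regular :: "nat \<Rightarrow> (nat \<Rightarrow> nat \<Rightarrow> nat) \<Rightarrow> nat \<Rightarrow> bool" where
  "regular n A lam \<longleftrightarrow>
     (\<forall>i<n. card {j. j < n \<and> A i j = 1} = lam) \<and>
     (\<forall>j<n. card {i. i < n \<and> A i j = 1} = lam)"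

definition fcount :: "nat \<Rightarrow> nat \<Rightarrow> nat \<Rightarrow> nat" where
  "fcount n lam a = (if a = 1 then lam else n - lam)"

definition orthogonal ::
  "nat \<Rightarrow> (nat \<Rightarrow> nat \<Rightarrow> nat) \<Rightarrow> nat \<Rightarrow> (nat \<Rightarrow> nat \<Rightarrow> nat) \<Rightarrow> nat \<Rightarrow> bool" where
  "orthogonal n A lam B mu \<longleftrightarrow>
     (\<forall>a\<in>{0,1}. \<forall>b\<in>{0,1}.
        card {(i,j). i < n \<and> j < n \<and> A i j = a \<and> B i j = b} = fcount n lam a * fcount n mu b)"

text \<open>Type of cell (i,j): the binary string x y F_0[i,j] ... F_{k-3}[i,j].\<close>
definition cell_type :: "nat list \<Rightarrow> (nat \<Rightarrow> nat \<Rightarrow> nat) list \<Rightarrow> nat \<Rightarrow> nat \<Rightarrow> nat list" where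
  "cell_type lam F i j =
     [if i < lam ! 0 then 1 else 0, if j < lam ! 1 then 1 else 0] @ map (\<lambda>A. A i j) F"

definition weight :: "nat list \<Rightarrow> nat" where
  "weight t = sum_list t"

definition template :: "nat \<Rightarrow> nat list \<Rightarrow> (nat \<Rightarrow> nat \<Rightarrow> nat) list \<Rightarrow> bool" where
  "template n lam F \<longleftrightarrow>
     even n \<and> length lam \<ge> 2 \<and> (\<forall>l\<in>set lam. even l) \<and>
     length F = length lam - 2 \<and>
     (\<forall>t < length F. is01 n (F ! t) \<and> regular n (F ! t) (lam ! (t + 2))) \<and>
     (\<forall>s < length F. \<forall>t < length F. s \<noteq> t \<longrightarrow>
         orthogonal n (F ! s) (lam ! (s + 2)) (F ! t) (lam ! (t + 2))) \<and>
     (\<forall>i<n. \<forall>j<n. weight (cell_type lam F i j) mod 2 = (sum_list lam div 2) mod 2)"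

end

theory Submission
  imports Defs
begin

text \<open>
  Since \<open>\<chi> = 7\<close> is odd, every cell has odd weight. A nonrelational row carries only
  \<open>2 + 2 + 2 = 6\<close> ones of \<open>F\<^sub>0, F\<^sub>1, F\<^sub>2\<close>, while each of its six cells in \<open>Q\<^sub>4\<close> has odd, hence positive,
  weight there; so these ones sit one per cell in \<open>Q\<^sub>4\<close> and none lie in \<open>Q\<^sub>3\<close>. The transposed
  argument empties \<open>Q\<^sub>2\<close>. A relational row then has all six ones in its four \<open>Q\<^sub>1\<close> cells,
  each carrying one or three of them; if \<open>n\<^sub>\<tau>\<close> counts the cells of pattern \<open>\<tau>\<close>, then
  \<open>n\<^sub>1\<^sub>0\<^sub>0 + n\<^sub>1\<^sub>1\<^sub>1 = n\<^sub>0\<^sub>1\<^sub>0 + n\<^sub>1\<^sub>1\<^sub>1 = n\<^sub>0\<^sub>0\<^sub>1 + n\<^sub>1\<^sub>1\<^sub>1 = 2\<close> and the four counts sum to 4,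
  which forces all of them to be 1.
\<close>

lemma is01_transpose: "is01 n A \<Longrightarrow> is01 n (\<lambda>i j. A j i)"
  unfolding is01_def by blast

lemma regular_transpose: "regular n A lam \<Longrightarrow> regular n (\<lambda>i j. A j i) lam"
  unfolding regular_def by blast

lemma card_eq_sum_01:
  fixes a :: "'a \<Rightarrow> nat"
  assumes "finite K" "\<And>k. k \<in> K \<Longrightarrow> a k \<le> 1"
  shows "card {k \<in> K. a k = 1} = sum a K"
proof -
  have "sum a K = (\<Sum>k\<in>K. of_bool (a k = 1))"
    using assms(2) by (intro sum.cong) (auto simp: le_Suc_eq)
  with assms(1) show ?thesis by (simp add: Collect_conj_eq Int_commute)
qed

lemma sum_le_card_forces_one:
  fixes f :: "'a \<Rightarrow> nat"
  assumes "finite K" "J \<subseteq> K" "sum f K \<le> card J" "\<And>j. j \<in> J \<Longrightarrow> 1 \<le> f j"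
  shows "k \<in> K - J \<Longrightarrow> f k = 0" and "j \<in> J \<Longrightarrow> f j = 1"
proof -
  have fin: "finite J" "finite (K - J)" using assms(1,2) finite_subset by auto
  have "(\<Sum>j\<in>J. 1) \<le> sum f J" by (rule sum_mono) (rule assms(4))
  then have card_le: "card J \<le> sum f J" by simp
  have split: "sum f K = sum f J + sum f (K - J)"
    using sum.subset_diff[OF assms(2,1), of f] by simp
  have "sum f (K - J) = 0" using split card_le assms(3) by linarith
  then show "k \<in> K - J \<Longrightarrow> f k = 0" using fin(2) by simp
  have "(\<Sum>j\<in>J. f j - 1) = 0"
    using sum_subtractf_nat[of J "\<lambda>_. 1" f] assms(4) split card_le assms(3) by simp
  then show "j \<in> J \<Longrightarrow> f j = 1" using fin(1) assms(4) by fastforce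
qed

lemma card_odd_types_eq_one:
  fixes a b c :: "'a \<Rightarrow> nat"
  assumes "finite K" "card K = 4"
    and types: "\<And>k. k \<in> K \<Longrightarrow> (a k, b k, c k) \<in> {(1,0,0), (0,1,0), (0,0,1), (1,1,1)}"
    and "sum a K = 2" "sum b K = 2" "sum c K = 2"
    and "\<tau> \<in> {(1,0,0), (0,1,0), (0,0,1), (1,1,1)}"
  shows "card {k \<in> K. (a k, b k, c k) = \<tau>} = 1"
proof -
  define N where "N \<tau> = card {k \<in> K. (a k, b k, c k) = \<tau>}" for \<tau>
  have indicator_sum: "(\<Sum>k\<in>K. of_bool ((a k, b k, c k) = \<sigma>)) = N \<sigma>" for \<sigma>
    using \<open>finite K\<close> by (simp add: N_def Collect_conj_eq Int_commute)
  have "sum a K = (\<Sum>k\<in>K. of_bool ((a k, b k, c k) = (1,0,0)) + of_bool ((a k, b k, c k) = (1,1,1)))"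
    by (rule sum.cong[OF refl]) (drule types, auto)
  then have na: "N (1,0,0) + N (1,1,1) = 2"
    using \<open>sum a K = 2\<close> by (simp only: sum.distrib indicator_sum)
  have "sum b K = (\<Sum>k\<in>K. of_bool ((a k, b k, c k) = (0,1,0)) + of_bool ((a k, b k, c k) = (1,1,1)))"
    by (rule sum.cong[OF refl]) (drule types, auto)
  then have nb: "N (0,1,0) + N (1,1,1) = 2"
    using \<open>sum b K = 2\<close> by (simp only: sum.distrib indicator_sum)
  have "sum c K = (\<Sum>k\<in>K. of_bool ((a k, b k, c k) = (0,0,1)) + of_bool ((a k, b k, c k) = (1,1,1)))"
    by (rule sum.cong[OF refl]) (drule types, auto)
  then have nc: "N (0,0,1) + N (1,1,1) = 2"
    using \<open>sum c K = 2\<close> by (simp only: sum.distrib indicator_sum)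
  have "card K = (\<Sum>k\<in>K. of_bool ((a k, b k, c k) = (1,0,0)) + of_bool ((a k, b k, c k) = (0,1,0))
      + of_bool ((a k, b k, c k) = (0,0,1)) + of_bool ((a k, b k, c k) = (1,1,1)))"
    unfolding card_eq_sum by (rule sum.cong[OF refl]) (drule types, auto)
  then have total: "N (1,0,0) + N (0,1,0) + N (0,0,1) + N (1,1,1) = 4"
    using \<open>card K = 4\<close> by (simp only: sum.distrib indicator_sum)
  show ?thesis
    using na nb nc total \<open>\<tau> \<in> _\<close> unfolding N_def[symmetric] by auto
qed

lemma regular_row_sum:
  assumes "is01 n X" "regular n X lam" "i < n"
  shows "(\<Sum>j<n. X i j) = lam"
proof -
  have "{j \<in> {..<n}. X i j = 1} = {j. j < n \<and> X i j = 1}" by auto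
  moreover have "card {j \<in> {..<n}. X i j = 1} = (\<Sum>j<n. X i j)"
    using assms(1,3) unfolding is01_def by (intro card_eq_sum_01) fastforce+
  ultimately show ?thesis using assms(2,3) unfolding regular_def by simp
qed

locale template_44222 =
  fixes A B C :: "nat \<Rightarrow> nat \<Rightarrow> nat"
  assumes zero_one: "is01 10 A" "is01 10 B" "is01 10 C"
    and regular: "regular 10 A 2" "regular 10 B 2" "regular 10 C 2"
    and odd_weight: "\<And>i j. i < 10 \<Longrightarrow> j < 10 \<Longrightarrow>
      odd (of_bool (i < 4) + of_bool (j < 4) + (A i j + B i j + C i j))"
begin

lemma transpose: "template_44222 (\<lambda>i j. A j i) (\<lambda>i j. B j i) (\<lambda>i j. C j i)"
proof
  fix i j :: nat
  assume "i < 10" "j < 10"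
  then show "odd (of_bool (i < 4) + of_bool (j < 4) + (A j i + B j i + C j i))"
    using odd_weight[of j i] by (simp add: ac_simps)
qed (use zero_one regular in \<open>simp_all add: is01_transpose regular_transpose\<close>)

lemma entries_le_1: "i < 10 \<Longrightarrow> j < 10 \<Longrightarrow> A i j \<le> 1 \<and> B i j \<le> 1 \<and> C i j \<le> 1"
  using zero_one unfolding is01_def by fastforce

lemma row_sums:
  assumes "i < 10"
  shows "(\<Sum>j<10. A i j) = 2" "(\<Sum>j<10. B i j) = 2" "(\<Sum>j<10. C i j) = 2"
  using assms zero_one regular by (simp_all add: regular_row_sum)

lemma nonrelational_row:
  assumes "4 \<le> i" "i < 10"
  shows "j < 4 \<Longrightarrow> A i j + B i j + C i j = 0"
    and "4 \<le> j \<Longrightarrow> j < 10 \<Longrightarrow> A i j + B i j + C i j = 1"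
proof -
  have total: "(\<Sum>j<10. A i j + B i j + C i j) \<le> card {4..<10::nat}"
    using row_sums[of i] assms by (simp add: sum.distrib)
  have positive: "1 \<le> A i j + B i j + C i j" if "j \<in> {4..<10}" for j
    using odd_weight[of i j] assms that by (cases "A i j + B i j + C i j") auto
  have "{4..<10} \<subseteq> {..<10::nat}" by auto
  note forced = sum_le_card_forces_one[OF finite_lessThan this total positive]
  show "j < 4 \<Longrightarrow> A i j + B i j + C i j = 0"
    using forced(1)[of j] by simp
  show "4 \<le> j \<Longrightarrow> j < 10 \<Longrightarrow> A i j + B i j + C i j = 1"
    using forced(2)[of j] by simp
qed

lemmas nonrelational_column = template_44222.nonrelational_row[OF transpose]

lemma quadrants_2_3:
  assumes "i < 10" "j < 10" "(i < 4 \<and> 4 \<le> j) \<or> (4 \<le> i \<and> j < 4)"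
  shows "drop 2 (cell_type [4,4,2,2,2] [A,B,C] i j) = [0,0,0]"
  using assms nonrelational_row(1)[of i j] nonrelational_column(1)[of j i]
  by (auto simp: cell_type_def)

lemma quadrant_1_entries:
  assumes "i < 4" "j < 4"
  shows "(A i j, B i j, C i j) \<in> {(1,0,0), (0,1,0), (0,0,1), (1,1,1)}"
  using odd_weight[of i j] entries_le_1[of i j] assms by (auto simp: le_Suc_eq)

lemma quadrant_1_row_sums:
  assumes "i < 4"
  shows "(\<Sum>j<4. A i j) = 2" "(\<Sum>j<4. B i j) = 2" "(\<Sum>j<4. C i j) = 2"
proof -
  have "(\<Sum>j<4. X i j) = (\<Sum>j<10. X i j)" if "X \<in> {A, B, C}" for X
    using that nonrelational_column(1)[of _ i] assms
    by (intro sum.mono_neutral_left) auto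
  then show "(\<Sum>j<4. A i j) = 2" "(\<Sum>j<4. B i j) = 2" "(\<Sum>j<4. C i j) = 2"
    using row_sums[of i] assms by auto
qed

lemma quadrant_1_types:
  assumes "i < 4" "j < 4"
  shows "cell_type [4,4,2,2,2] [A,B,C] i j \<in> {[1,1,0,0,1], [1,1,0,1,0], [1,1,1,0,0], [1,1,1,1,1]}"
  using quadrant_1_entries[OF assms] assms by (auto simp: cell_type_def)

lemma quadrant_1_row_count:
  assumes "i < 4" "\<tau> \<in> {[1,1,0,0,1], [1,1,0,1,0], [1,1,1,0,0], [1,1,1,1,1]}"
  shows "card {j. j < 4 \<and> cell_type [4,4,2,2,2] [A,B,C] i j = \<tau>} = 1"
proof -
  obtain a b c where \<tau>: "\<tau> = [1,1,a,b,c]" and abc: "(a,b,c) \<in> {(1,0,0), (0,1,0), (0,0,1), (1,1,1)}"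
    using assms(2) by auto
  have "{j. j < 4 \<and> cell_type [4,4,2,2,2] [A,B,C] i j = \<tau>}
      = {j \<in> {..<4}. (A i j, B i j, C i j) = (a,b,c)}"
    using assms(1) by (auto simp: \<tau> cell_type_def)
  also have "card \<dots> = 1"
    using quadrant_1_entries[OF assms(1)] quadrant_1_row_sums[OF assms(1)] abc
    by (intro card_odd_types_eq_one) auto
  finally show ?thesis .
qed

lemma quadrant_1_column_count:
  assumes "j < 4" "\<tau> \<in> {[1,1,0,0,1], [1,1,0,1,0], [1,1,1,0,0], [1,1,1,1,1]}"
  shows "card {i. i < 4 \<and> cell_type [4,4,2,2,2] [A,B,C] i j = \<tau>} = 1"
proof -
  have "{i. i < 4 \<and> cell_type [4,4,2,2,2] [A,B,C] i j = \<tau>}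
      = {i. i < 4 \<and> cell_type [4,4,2,2,2] [\<lambda>i j. A j i, \<lambda>i j. B j i, \<lambda>i j. C j i] j i = \<tau>}"
    using assms(1) by (auto simp: cell_type_def)
  then show ?thesis
    using template_44222.quadrant_1_row_count[OF transpose assms] by simp
qed

lemma quadrant_4_types:
  assumes "i \<in> {4..<10}" "j \<in> {4..<10}"
  shows "cell_type [4,4,2,2,2] [A,B,C] i j \<in> {[0,0,0,0,1], [0,0,0,1,0], [0,0,1,0,0]}"
  using nonrelational_row(2)[of i j] assms by (auto simp: cell_type_def add_is_1)

lemma quadrant_4_row_count:
  assumes "i \<in> {4..<10}" "\<tau> \<in> {[0,0,0,0,1], [0,0,0,1,0], [0,0,1,0,0]}"
  shows "card {j. 4 \<le> j \<and> j < 10 \<and> cell_type [4,4,2,2,2] [A,B,C] i j = \<tau>} = 2"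
proof -
  have cell: "cell_type [4,4,2,2,2] [A,B,C] i j = [0, of_bool (j < 4), A i j, B i j, C i j]" for j
    using assms(1) by (simp add: cell_type_def)
  have zero: "A i j = 0 \<and> B i j = 0 \<and> C i j = 0" if "j < 4" for j
    using nonrelational_row(1)[of i j] assms(1) that by simp
  have one: "A i j + B i j + C i j = 1" if "4 \<le> j" "j < 10" for j
    using nonrelational_row(2)[of i j] assms(1) that by simp
  have "{j. 4 \<le> j \<and> j < 10 \<and> cell_type [4,4,2,2,2] [A,B,C] i j = \<tau>} = {j. j < 10 \<and> X i j = 1}"
    if "(\<tau>, X) \<in> {([0,0,1,0,0], A), ([0,0,0,1,0], B), ([0,0,0,0,1], C)}" for X
  proof (intro Collect_cong iffI)
    fix j
    assume "4 \<le> j \<and> j < 10 \<and> cell_type [4,4,2,2,2] [A,B,C] i j = \<tau>"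
    then show "j < 10 \<and> X i j = 1" using that by (auto simp: cell)
  next
    fix j
    assume j: "j < 10 \<and> X i j = 1"
    with zero that have "4 \<le> j" by (cases "j < 4") auto
    with j one[of j] that show "4 \<le> j \<and> j < 10 \<and> cell_type [4,4,2,2,2] [A,B,C] i j = \<tau>"
      by (auto simp: cell)
  qed
  moreover obtain X where "(\<tau>, X) \<in> {([0,0,1,0,0], A), ([0,0,0,1,0], B), ([0,0,0,0,1], C)}"
    using assms(2) by auto
  ultimately show ?thesis
    using regular assms(1) unfolding regular_def by auto
qed

lemma quadrant_4_column_count:
  assumes "j \<in> {4..<10}" "\<tau> \<in> {[0,0,0,0,1], [0,0,0,1,0], [0,0,1,0,0]}"
  shows "card {i. 4 \<le> i \<and> i < 10 \<and> cell_type [4,4,2,2,2] [A,B,C] i j = \<tau>} = 2"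
proof -
  have "{i. 4 \<le> i \<and> i < 10 \<and> cell_type [4,4,2,2,2] [A,B,C] i j = \<tau>}
      = {i. 4 \<le> i \<and> i < 10 \<and> cell_type [4,4,2,2,2] [\<lambda>i j. A j i, \<lambda>i j. B j i, \<lambda>i j. C j i] j i = \<tau>}"
    using assms(1) by (auto simp: cell_type_def)
  then show ?thesis
    using template_44222.quadrant_4_row_count[OF transpose assms] by simp
qed

end

lemma template_44222_arrays:
  assumes "template 10 [4,4,2,2,2] F"
  obtains A B C where "F = [A,B,C]" "template_44222 A B C"
proof -
  have "length F = 3" using assms by (simp add: template_def)
  then obtain A B C where F: "F = [A,B,C]"
    by (auto simp: numeral_3_eq_3 length_Suc_conv)
  have arrays: "is01 10 (F ! t) \<and> regular 10 (F ! t) ([4,4,2,2,2] ! (t + 2))" if "t < length F" for t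
    using assms that unfolding template_def by blast
  have "template_44222 A B C"
  proof
    show "is01 10 A" "is01 10 B" "is01 10 C" "regular 10 A 2" "regular 10 B 2" "regular 10 C 2"
      using arrays[of 0] arrays[of 1] arrays[of 2] by (simp_all add: F)
    fix i j :: nat
    assume "i < 10" "j < 10"
    then have "weight (cell_type [4,4,2,2,2] F i j) mod 2 = 1"
      using assms unfolding template_def by auto
    moreover have "weight (cell_type [4,4,2,2,2] F i j)
        = of_bool (i < 4) + of_bool (j < 4) + (A i j + B i j + C i j)"
      by (simp add: F cell_type_def weight_def)
    ultimately show "odd (of_bool (i < 4) + of_bool (j < 4) + (A i j + B i j + C i j))"
      by (metis odd_iff_mod_2_eq_one)
  qed
  with F show thesis by (rule that)
qed

theorem mainTheorem9:
  fixes F :: "(nat \<Rightarrow> nat \<Rightarrow> nat) list"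
  assumes "template 10 [4,4,2,2,2] F"
  shows
   "(\<forall>i<10. \<forall>j<10. ((i < 4 \<and> 4 \<le> j) \<or> (4 \<le> i \<and> j < 4)) \<longrightarrow>
        drop 2 (cell_type [4,4,2,2,2] F i j) = [0,0,0])
    \<and>
    (\<forall>i<4. \<forall>j<4. cell_type [4,4,2,2,2] F i j \<in>
        {[1,1,0,0,1], [1,1,0,1,0], [1,1,1,0,0], [1,1,1,1,1]})
    \<and>
    (\<forall>\<tau>\<in>{[1,1,0,0,1], [1,1,0,1,0], [1,1,1,0,0], [1,1,1,1,1]}.
        (\<forall>i<4. card {j. j < 4 \<and> cell_type [4,4,2,2,2] F i j = \<tau>} = 1) \<and>
        (\<forall>j<4. card {i. i < 4 \<and> cell_type [4,4,2,2,2] F i j = \<tau>} = 1))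
    \<and>
    (\<forall>i\<in>{4..<10}. \<forall>j\<in>{4..<10}. cell_type [4,4,2,2,2] F i j \<in>
        {[0,0,0,0,1], [0,0,0,1,0], [0,0,1,0,0]})
    \<and>
    (\<forall>\<tau>\<in>{[0,0,0,0,1], [0,0,0,1,0], [0,0,1,0,0]}.
        (\<forall>i\<in>{4..<10}. card {j. 4 \<le> j \<and> j < 10 \<and> cell_type [4,4,2,2,2] F i j = \<tau>} = 2) \<and>
        (\<forall>j\<in>{4..<10}. card {i. 4 \<le> i \<and> i < 10 \<and> cell_type [4,4,2,2,2] F i j = \<tau>} = 2))"
proof -
  obtain A B C where F: "F = [A,B,C]" and arrays: "template_44222 A B C"
    using template_44222_arrays[OF assms] .
  interpret template_44222 A B C by (fact arrays)
  show ?thesis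
    unfolding F
    by (intro conjI allI impI ballI quadrants_2_3 quadrant_1_types quadrant_1_row_count
        quadrant_1_column_count quadrant_4_types quadrant_4_row_count quadrant_4_column_count)
      auto
qed

end
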